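(* Let $G$ be a finite group. Then every subsemigroup of $\mathbb{N}\times G$ is finitely generated; consequently $\mathbb{N}\times G$ has only countably many subsemigroups.
   Context: $\mathbb{N}=\{1,2,3,\dots\}$ is the free monogenic semigroup (positive integers under addition); $\mathbb{N}\times G$ is the direct product with componentwise operation. *)

theory Defs
  imports "HOL-Algebra.Group" "HOL-Library.Countable_Set"
begin

definition NG_carrier :: "('g, 'b) monoid_scheme \<Rightarrow> (nat \<times> 'g) set" where
  "NG_carrier G = {n. n \<ge> 1} \<times> carrier G"

definition NG_mult :: "('g, 'b) monoid_scheme \<Rightarrow> nat \<times> 'g \<Rightarrow> nat \<times> 'g \<Rightarrow> nat \<times> 'g" where
  "NG_mult G x y = (fst x + fst y, snd x \<otimes>\<^bsub>G\<^esub> snd y)"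

definition NG_subsemigroup :: "('g, 'b) monoid_scheme \<Rightarrow> (nat \<times> 'g) set \<Rightarrow> bool" where
  "NG_subsemigroup G S \<longleftrightarrow> S \<subseteq> NG_carrier G \<and> (\<forall>x\<in>S. \<forall>y\<in>S. NG_mult G x y \<in> S)"

inductive_set NG_generated :: "('g, 'b) monoid_scheme \<Rightarrow> (nat \<times> 'g) set \<Rightarrow> (nat \<times> 'g) set"
  for G F where
  gen_base: "x \<in> F \<Longrightarrow> x \<in> NG_generated G F"
| gen_mult: "x \<in> NG_generated G F \<Longrightarrow> y \<in> NG_generated G F \<Longrightarrow> NG_mult G x y \<in> NG_generated G F"

definition NG_fin_gen :: "('g, 'b) monoid_scheme \<Rightarrow> (nat \<times> 'g) set \<Rightarrow> bool" where
  "NG_fin_gen G S \<longleftrightarrow> (\<exists>F. finite F \<and> F \<subseteq> S \<and> NG_generated G F = S)"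

end

theory Submission
  imports Defs "HOL-Algebra.Multiplicative_Group"
begin

text \<open>Any nonempty subsemigroup S of N x G contains a central element c = (p, 1): take
  (a, h) \<in> S and p = |G| a, since h to the power |G| is 1. Adding multiples of c never leaves S,
  so S is generated by its Apery set with respect to c, the elements of S that are not c plus
  an element of S. Two distinct elements of the Apery set with the same second coordinate cannot
  have first coordinates congruent modulo p, hence the Apery set is finite. Countability follows
  because a countable set has only countably many finite subsets.\<close>

text \<open>No guard on the subtraction is needed: for fst x \<le> p the truncated difference is 0,
  and no element of a subsemigroup has first coordinate 0.\<close>

definition NG_apery_set :: "nat \<Rightarrow> (nat \<times> 'g) set \<Rightarrow> (nat \<times> 'g) set" where
  "NG_apery_set p S = {x \<in> S. (fst x - p, snd x) \<notin> S}"

lemma NG_subsemigroupD: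
  assumes "NG_subsemigroup G S" and "x \<in> S"
  shows "fst x \<ge> 1" and "snd x \<in> carrier G"
  using assms by (auto simp: NG_subsemigroup_def NG_carrier_def)

lemma NG_subsemigroup_mult_closed:
  assumes "NG_subsemigroup G S" and "x \<in> S" and "y \<in> S"
  shows "NG_mult G x y \<in> S"
  using assms by (simp add: NG_subsemigroup_def)

lemma NG_generated_subset:
  assumes "NG_subsemigroup G S" and "F \<subseteq> S"
  shows "NG_generated G F \<subseteq> S"
proof
  fix x assume "x \<in> NG_generated G F"
  then show "x \<in> S"
    by induction (use assms NG_subsemigroup_mult_closed in blast)+
qed

lemma NG_subsemigroup_nat_pow:
  assumes "monoid G" and "NG_subsemigroup G S" and "(a, h) \<in> S"
  shows "(Suc k * a, h [^]\<^bsub>G\<^esub> Suc k) \<in> S"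
proof (induction k)
  case 0
  have "h \<in> carrier G" using NG_subsemigroupD(2)[OF assms(2,3)] by simp
  then show ?case using assms by (simp add: monoid.l_one)
next
  case (Suc k)
  have "NG_mult G (Suc k * a, h [^]\<^bsub>G\<^esub> Suc k) (a, h) \<in> S"
    using Suc assms NG_subsemigroup_mult_closed by blast
  then show ?case by (simp add: NG_mult_def add.commute)
qed

lemma NG_subsemigroup_central_element:
  assumes "group G" and "finite (carrier G)" and "NG_subsemigroup G S" and "S \<noteq> {}"
  obtains p where "p \<ge> 1" and "(p, \<one>\<^bsub>G\<^esub>) \<in> S"
proof -
  obtain a h where ah: "(a, h) \<in> S" using assms(4) by auto
  have "a \<ge> 1" and h: "h \<in> carrier G" using NG_subsemigroupD[OF assms(3) ah] by auto
  have "0 < order G"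
    using assms(1,2) by (simp add: group.is_monoid monoid.order_gt_0_iff_finite)
  then obtain m where m: "order G = Suc m" using gr0_implies_Suc by blast
  have "(Suc m * a, h [^]\<^bsub>G\<^esub> Suc m) \<in> S"
    using NG_subsemigroup_nat_pow[OF group.is_monoid[OF assms(1)] assms(3) ah] .
  moreover have "h [^]\<^bsub>G\<^esub> order G = \<one>\<^bsub>G\<^esub>"
    using group.pow_order_eq_1[OF assms(1) h] .
  ultimately have "(order G * a, \<one>\<^bsub>G\<^esub>) \<in> S" by (simp only: m)
  moreover have "order G * a \<ge> 1" using \<open>0 < order G\<close> \<open>a \<ge> 1\<close> by simp
  ultimately show thesis using that by blast
qed

lemma NG_subsemigroup_add_central:
  assumes "monoid G" and "NG_subsemigroup G S" and "(p, \<one>\<^bsub>G\<^esub>) \<in> S" and "x \<in> S"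
  shows "(fst x + k * p, snd x) \<in> S"
proof (induction k)
  case 0
  show ?case using assms(4) by simp
next
  case (Suc k)
  have "NG_mult G (fst x + k * p, snd x) (p, \<one>\<^bsub>G\<^esub>) \<in> S"
    using Suc assms(2,3) NG_subsemigroup_mult_closed by blast
  then show ?case
    using NG_subsemigroupD(2)[OF assms(2,4)] assms(1) by (simp add: NG_mult_def monoid.r_one add_ac)
qed

lemma NG_apery_set_inj_on_mod:
  assumes "monoid G" and "NG_subsemigroup G S" and "(p, \<one>\<^bsub>G\<^esub>) \<in> S"
  shows "inj_on (\<lambda>x. (fst x mod p, snd x)) (NG_apery_set p S)"
proof -
  have no_congruent_pair: False
    if u: "u \<in> NG_apery_set p S" and v: "v \<in> NG_apery_set p S" and "fst u < fst v"
    and "fst u mod p = fst v mod p" and "snd u = snd v" for u v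
  proof -
    have "p dvd fst v - fst u"
      using mod_eq_dvd_iff_nat[of "fst u" "fst v" p] that(3,4) by simp
    then obtain k where k: "fst v = fst u + p * k"
      using \<open>fst u < fst v\<close> by (metis dvdE le_add_diff_inverse less_imp_le)
    then obtain j where "k = Suc j" using \<open>fst u < fst v\<close> by (cases k) auto
    then have "fst v - p = fst u + j * p" using k by simp
    moreover have "(fst u + j * p, snd u) \<in> S"
      using u NG_subsemigroup_add_central[OF assms] by (simp add: NG_apery_set_def)
    ultimately show False using v \<open>snd u = snd v\<close> by (simp add: NG_apery_set_def)
  qed
  show ?thesis
  proof (rule inj_onI)
    fix x y assume "x \<in> NG_apery_set p S" and "y \<in> NG_apery_set p S"
      and "(fst x mod p, snd x) = (fst y mod p, snd y)"
    then show "x = y"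
      using no_congruent_pair[of x y] no_congruent_pair[of y x]
      by (cases "fst x" "fst y" rule: linorder_cases) (auto simp: prod_eq_iff)
  qed
qed

lemma finite_NG_apery_set:
  assumes "monoid G" and "finite (carrier G)" and "NG_subsemigroup G S"
    and "p \<ge> 1" and "(p, \<one>\<^bsub>G\<^esub>) \<in> S"
  shows "finite (NG_apery_set p S)"
proof -
  have "(\<lambda>x. (fst x mod p, snd x)) ` NG_apery_set p S \<subseteq> {..<p} \<times> carrier G"
    using NG_subsemigroupD(2)[OF assms(3)] assms(4) by (auto simp: NG_apery_set_def)
  then have "finite ((\<lambda>x. (fst x mod p, snd x)) ` NG_apery_set p S)"
    using assms(2) finite_subset by blast
  then show ?thesis
    using finite_imageD NG_apery_set_inj_on_mod[OF assms(1,3,5)] by blast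
qed

lemma NG_generated_apery_set:
  assumes "monoid G" and "NG_subsemigroup G S" and "(p, \<one>\<^bsub>G\<^esub>) \<in> S"
  shows "NG_generated G (NG_apery_set p S) = S"
proof
  show "NG_generated G (NG_apery_set p S) \<subseteq> S"
    using NG_generated_subset[OF assms(2)] by (auto simp: NG_apery_set_def)
  have "(p, \<one>\<^bsub>G\<^esub>) \<in> NG_apery_set p S"
    using assms(3) NG_subsemigroupD(1)[OF assms(2)] by (force simp: NG_apery_set_def)
  then have central: "(p, \<one>\<^bsub>G\<^esub>) \<in> NG_generated G (NG_apery_set p S)" by (rule gen_base)
  have "x \<in> NG_generated G (NG_apery_set p S)" if "x \<in> S" and "fst x = n" for x n
    using that
  proof (induction n arbitrary: x rule: less_induct)
    case (less n)
    show ?case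
    proof (cases "x \<in> NG_apery_set p S")
      case True
      then show ?thesis by (rule gen_base)
    next
      case False
      then have y: "(fst x - p, snd x) \<in> S" using less.prems(1) by (simp add: NG_apery_set_def)
      have "fst x - p \<ge> 1" using NG_subsemigroupD(1)[OF assms(2) y] by simp
      moreover have "p \<ge> 1" using NG_subsemigroupD(1)[OF assms(2,3)] by simp
      ultimately have "fst x - p < n" using less.prems(2) by simp
      then have "(fst x - p, snd x) \<in> NG_generated G (NG_apery_set p S)"
        using less.IH y by simp
      from gen_mult[OF this central]
      show ?thesis
        using \<open>fst x - p \<ge> 1\<close> NG_subsemigroupD(2)[OF assms(2) less.prems(1)] assms(1)
        by (simp add: NG_mult_def monoid.r_one)
    qed
  qed
  then show "S \<subseteq> NG_generated G (NG_apery_set p S)" by blast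
qed

lemma NG_subsemigroup_fin_gen:
  assumes "group G" and "finite (carrier G)" and "NG_subsemigroup G S"
  shows "NG_fin_gen G S"
proof (cases "S = {}")
  case True
  then show ?thesis
    using NG_generated_subset[OF assms(3)] unfolding NG_fin_gen_def by blast
next
  case False
  obtain p where "p \<ge> 1" and c: "(p, \<one>\<^bsub>G\<^esub>) \<in> S"
    using NG_subsemigroup_central_element[OF assms False] .
  have "monoid G" using assms(1) by (rule group.is_monoid)
  moreover have "NG_apery_set p S \<subseteq> S" by (auto simp: NG_apery_set_def)
  ultimately show ?thesis
    unfolding NG_fin_gen_def
    using finite_NG_apery_set[OF _ assms(2,3) \<open>p \<ge> 1\<close> c] NG_generated_apery_set[OF _ assms(3) c]
    by blast
qed

lemma countable_NG_subsemigroups: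
  assumes "countable (carrier G)" and "\<And>S. NG_subsemigroup G S \<Longrightarrow> NG_fin_gen G S"
  shows "countable {S. NG_subsemigroup G S}"
proof -
  have "countable (NG_carrier G)"
    unfolding NG_carrier_def using assms(1) by (intro countable_SIGMA) auto
  then have "countable (NG_generated G ` {F. finite F \<and> F \<subseteq> NG_carrier G})"
    by (intro countable_image countable_Collect_finite_subset)
  moreover have "{S. NG_subsemigroup G S} \<subseteq> NG_generated G ` {F. finite F \<and> F \<subseteq> NG_carrier G}"
  proof
    fix S assume "S \<in> {S. NG_subsemigroup G S}"
    then have "NG_fin_gen G S" and "S \<subseteq> NG_carrier G"
      using assms(2) by (auto simp: NG_subsemigroup_def)
    then show "S \<in> NG_generated G ` {F. finite F \<and> F \<subseteq> NG_carrier G}"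
      unfolding NG_fin_gen_def by blast
  qed
  ultimately show ?thesis by (rule countable_subset[rotated])
qed

theorem lemma3p1:
  fixes G :: "('g, 'b) monoid_scheme"
  assumes "group G" and "finite (carrier G)"
  shows "(\<forall>S. NG_subsemigroup G S \<longrightarrow> NG_fin_gen G S) \<and> countable {S. NG_subsemigroup G S}"
  using NG_subsemigroup_fin_gen[OF assms]
    countable_NG_subsemigroups[OF countable_finite[OF assms(2)]] by blast

end
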